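(* Let $I\subset\mathbb R$ be an interval and $\alpha\in C^\infty(I,C^\infty(\mathbb S))$ a solution of $\frac{\partial\alpha_\tau}{\partial\tau}=-\alpha_\tau(\Lambda\alpha_\tau)+(\mathcal H\alpha_\tau)(D\alpha_\tau)$ on $I$ such that $\alpha_\tau$ is a positive function for every $\tau\in I$. Then $\int_0^{2\pi}\alpha_\tau^{-1}\,d\theta$ is independent of $\tau\in I$.
   Context: $D=-i\,d/d\theta$, $\Lambda e^{in\theta}=|n|e^{in\theta}$, Hilbert transform $\mathcal H\mathbf 1=0$, $\mathcal He^{in\theta}=\mathrm{sgn}(n)e^{in\theta}$ ($n\ne0$); products are pointwise products of functions on $\mathbb S$. *)

theory Defs
  imports "HOL-Analysis.Analysis"
begin

text \<open>Functions on the circle S are 2pi-periodic functions on the real line.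
  Fourier coefficients of f: c_n = (1/2pi) * integral over [0,2pi] of f(theta) e^{-i n theta}.\<close>
definition fourier_coeff :: "(real \<Rightarrow> complex) \<Rightarrow> int \<Rightarrow> complex" where
  "fourier_coeff f n = integral {0..2*pi} (\<lambda>\<theta>. f \<theta> * cis (- (of_int n * \<theta>))) / complex_of_real (2*pi)"

definition hilbert :: "(real \<Rightarrow> complex) \<Rightarrow> real \<Rightarrow> complex" where
  "hilbert f \<theta> = (\<Sum>\<^sub>\<infinity>n::int. of_int (sgn n) * fourier_coeff f n * cis (of_int n * \<theta>))"

definition Lam :: "(real \<Rightarrow> complex) \<Rightarrow> real \<Rightarrow> complex" where
  "Lam f \<theta> = (\<Sum>\<^sub>\<infinity>n::int. of_int \<bar>n\<bar> * fourier_coeff f n * cis (of_int n * \<theta>))"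

definition Dop :: "(real \<Rightarrow> complex) \<Rightarrow> real \<Rightarrow> complex" where
  "Dop f \<theta> = - \<i> * vector_derivative f (at \<theta>)"

text \<open>Joint C-infinity smoothness of a function of two real variables on a set S of R^2:
  there is a family G j k (playing the role of the partial derivative d^j/dx^j d^k/dy^k f)
  with G 0 0 = f on S and each G j k Frechet differentiable within S with derivative given
  by the next partial derivatives.\<close>
definition smooth2_on :: "(real \<times> real) set \<Rightarrow> (real \<times> real \<Rightarrow> real) \<Rightarrow> bool" where
  "smooth2_on S f \<longleftrightarrow> (\<exists>G :: nat \<Rightarrow> nat \<Rightarrow> real \<times> real \<Rightarrow> real.
     (\<forall>x\<in>S. G 0 0 x = f x) \<and>
     (\<forall>j k. \<forall>x\<in>S. (G j k has_derivative (\<lambda>h. fst h * G (Suc j) k x + snd h * G j (Suc k) x))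
                     (at x within S)))"

end

theory Submission
  imports Defs
begin

text \<open>Differentiating under the integral sign,
  \<open>d/d\<tau> \<integral> \<alpha>\<^sup>-\<^sup>1 = - \<integral> \<partial>\<^sub>\<tau>\<alpha> / \<alpha>\<^sup>2 = \<integral> (\<Lambda>\<alpha>) \<alpha>\<^sup>-\<^sup>1 + (\<H>\<alpha>) D(\<alpha>\<^sup>-\<^sup>1)\<close>.
  Expanding \<open>\<alpha> = \<Sum> a\<^sub>n e\<^sup>i\<^sup>n\<^sup>\<theta>\<close> and using \<open>|n| = sgn n \<cdot> n\<close>, the \<open>n\<close>-th term of the last integrand is
  \<open>sgn n \<cdot> a\<^sub>n \<cdot> D(e\<^sup>i\<^sup>n\<^sup>\<theta> \<alpha>\<^sup>-\<^sup>1)\<close>, whose integral over a period vanishes. Smoothness makes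
  \<open>|a\<^sub>n|\<close> decay like \<open>|n|\<^sup>-\<^sup>3\<close>, so the symmetric partial sums are dominated and the sum may be
  taken out of the integral.\<close>

lemma has_vector_derivative_cis_linear:
  "((\<lambda>x. cis (c * x)) has_vector_derivative \<i> * complex_of_real c * cis (c * x)) (at x within S)"
proof -
  have "((\<lambda>x. cis (c * x)) has_derivative (\<lambda>t. (c * t) *\<^sub>R (\<i> * cis (c * x)))) (at x within S)"
    by (rule has_derivative_cis) (auto intro!: derivative_eq_intros)
  thus ?thesis unfolding has_vector_derivative_def
    by (rule has_derivative_eq_rhs) (auto simp: fun_eq_iff scaleR_conv_of_real algebra_simps)
qed

lemma fourier_coeff_deriv:
  fixes f f' :: "real \<Rightarrow> real"
  assumes f': "\<And>x. (f has_real_derivative f' x) (at x)" and cont: "continuous_on UNIV f'"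
    and per: "f (2*pi) = f 0"
  shows "fourier_coeff (\<lambda>x. complex_of_real (f' x)) n
           = \<i> * of_int n * fourier_coeff (\<lambda>x. complex_of_real (f x)) n"
proof -
  define e where "e x = cis (- of_int n * x)" for x
  define F where "F x = complex_of_real (f x) * e x" for x
  define F' where "F' x = - \<i> * of_int n * F x + complex_of_real (f' x) * e x" for x
  have e_deriv: "(e has_vector_derivative - \<i> * of_int n * e x) (at x within S)" for x S
    using has_vector_derivative_cis_linear[of "- of_int n"] unfolding e_def by simp
  have "(F has_vector_derivative F' x) (at x within {0..2*pi})" for x
    using has_vector_derivative_mult[OF has_vector_derivative_of_real[OF DERIV_subset[OF f']] e_deriv]
    unfolding F_def F'_def by (simp add: algebra_simps)
  hence "(F' has_integral F (2*pi) - F 0) {0..2*pi}"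
    by (intro fundamental_theorem_of_calculus) auto
  moreover have "F (2*pi) = F 0"
    using cis_multiple_2pi[of "- of_int n"] per by (simp add: F_def e_def mult.commute mult.left_commute)
  ultimately have F'_0: "(F' has_integral 0) {0..2*pi}"
    by simp
  have "continuous_on UNIV f"
    using f' by (meson DERIV_isCont continuous_at_imp_continuous_on)
  hence "continuous_on UNIV F" "continuous_on UNIV (\<lambda>x. complex_of_real (f' x) * e x)"
    using cont unfolding F_def e_def by (auto intro!: continuous_intros)
  hence "F integrable_on {0..2*pi}" "(\<lambda>x. complex_of_real (f' x) * e x) integrable_on {0..2*pi}"
    by (auto intro: integrable_continuous_real continuous_on_subset)
  hence "(F' has_integral - \<i> * of_int n * integral {0..2*pi} F
                          + integral {0..2*pi} (\<lambda>x. complex_of_real (f' x) * e x)) {0..2*pi}"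
    unfolding F'_def by (intro has_integral_add has_integral_mult_right integrable_integral)
  hence "integral {0..2*pi} (\<lambda>x. complex_of_real (f' x) * e x)
           = \<i> * of_int n * integral {0..2*pi} F"
    using has_integral_unique[OF F'_0] by fastforce
  thus ?thesis
    by (simp add: fourier_coeff_def F_def[abs_def] e_def)
qed

lemma norm_fourier_coeff_le:
  assumes "continuous_on {0..2*pi} g" and "\<And>x. x \<in> {0..2*pi} \<Longrightarrow> \<bar>g x\<bar> \<le> B"
  shows "norm (fourier_coeff (\<lambda>x. complex_of_real (g x)) n) \<le> B"
proof -
  have "norm (integral {0..2*pi} (\<lambda>x. complex_of_real (g x) * cis (- (of_int n * x)))) \<le> B * (2*pi - 0)"
    by (rule integral_bound) (use assms in \<open>auto intro!: continuous_intros simp: norm_mult\<close>)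
  thus ?thesis
    by (simp add: fourier_coeff_def norm_divide divide_le_eq mult.commute)
qed

lemma periodic_higher_derivs:
  fixes d :: "nat \<Rightarrow> real \<Rightarrow> real"
  assumes der: "\<And>k x. (d k has_real_derivative d (Suc k) x) (at x)"
    and per: "\<And>x. d 0 (x + p) = d 0 x"
  shows "d k (x + p) = d k x"
proof (induction k arbitrary: x)
  case 0
  show ?case by (rule per)
next
  case (Suc k)
  have "((\<lambda>x. d k (x + p)) has_real_derivative d (Suc k) (x + p)) (at x)"
    using der[of k "x + p"] DERIV_shift by blast
  moreover have "((\<lambda>x. d k (x + p)) has_real_derivative d (Suc k) x) (at x)"
    using der[of k x] Suc.IH by simp
  ultimately show ?case
    by (rule DERIV_unique)
qed

lemma fourier_coeff_higher_deriv:
  fixes d :: "nat \<Rightarrow> real \<Rightarrow> real"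
  assumes der: "\<And>k x. (d k has_real_derivative d (Suc k) x) (at x)"
    and per: "\<And>k. d k (2*pi) = d k 0"
  shows "fourier_coeff (\<lambda>x. complex_of_real (d k x)) n
           = (\<i> * of_int n) ^ k * fourier_coeff (\<lambda>x. complex_of_real (d 0 x)) n"
proof (induction k)
  case (Suc k)
  have "continuous_on UNIV (d (Suc k))"
    using der by (meson DERIV_isCont continuous_at_imp_continuous_on)
  with Suc show ?case
    by (simp add: fourier_coeff_deriv[OF der _ per])
qed simp

definition decay_weight :: "int \<Rightarrow> real" where
  "decay_weight n = 1 / (max 1 \<bar>real_of_int n\<bar>)^2"

lemma decay_weight_pos: "0 < decay_weight n"
  by (simp add: decay_weight_def)

lemma summable_on_decay_weight: "decay_weight summable_on UNIV"
proof -
  have "summable (\<lambda>k::nat. inverse (real k ^ 2))"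
    by (rule inverse_power_summable) simp
  moreover have "eventually (\<lambda>k. inverse (real k ^ 2) = decay_weight (int k)) sequentially"
    using eventually_gt_at_top[of 0] by eventually_elim (simp add: decay_weight_def divide_inverse)
  ultimately have "summable (\<lambda>k. decay_weight (int k))"
    using summable_cong by fastforce
  hence nat: "(\<lambda>k. decay_weight (int k)) summable_on UNIV"
    by (simp add: summable_on_UNIV_nonneg_real_iff less_imp_le decay_weight_pos)
  have "decay_weight summable_on range int"
    using nat by (subst summable_on_reindex) (auto simp: o_def)
  moreover have "decay_weight summable_on range (\<lambda>k. - int k)"
    using nat by (subst summable_on_reindex) (auto simp: o_def inj_on_def decay_weight_def)
  ultimately have "decay_weight summable_on (range int \<union> range (\<lambda>k. - int k))"
    by (rule summable_on_union)
  moreover have "n \<in> range int \<union> range (\<lambda>k. - int k)" for n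
  proof (cases "0 \<le> n")
    case True
    hence "n = int (nat n)" by simp
    thus ?thesis by blast
  next
    case False
    hence "n = - int (nat (- n))" by simp
    thus ?thesis by blast
  qed
  ultimately show ?thesis
    by (metis UNIV_eq_I)
qed

lemma fourier_coeff_decay:
  fixes d :: "nat \<Rightarrow> real \<Rightarrow> real"
  assumes der: "\<And>k x. (d k has_real_derivative d (Suc k) x) (at x)"
    and per: "\<And>k. d k (2*pi) = d k 0"
  obtains K where "\<And>n. norm (fourier_coeff (\<lambda>x. complex_of_real (d 0 x)) n) * (\<bar>real_of_int n\<bar> + 1)
                         \<le> K * decay_weight n"
proof -
  define c where "c n = fourier_coeff (\<lambda>x. complex_of_real (d 0 x)) n" for n
  have cont: "continuous_on {0..2*pi} (d k)" for k
    using der by (meson DERIV_isCont continuous_at_imp_continuous_on)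
  have "\<exists>B. \<forall>x\<in>{0..2*pi}. \<bar>d k x\<bar> \<le> B" for k
    using compact_imp_bounded[OF compact_continuous_image[OF cont compact_Icc]] by (simp add: bounded_iff)
  then obtain B0 B3 where B: "\<And>x. x \<in> {0..2*pi} \<Longrightarrow> \<bar>d 0 x\<bar> \<le> B0"
    "\<And>x. x \<in> {0..2*pi} \<Longrightarrow> \<bar>d 3 x\<bar> \<le> B3"
    by meson
  have c_le: "norm (c n) \<le> B0" for n
    unfolding c_def by (rule norm_fourier_coeff_le[OF cont B(1)])
  have c_cube_le: "norm (c n) * \<bar>real_of_int n\<bar> ^ 3 \<le> B3" for n
    using norm_fourier_coeff_le[OF cont B(2), of n] fourier_coeff_higher_deriv[of d, OF der per, of 3 n]
    by (simp add: c_def norm_mult norm_power mult.commute)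
  have "norm (c n) * (\<bar>real_of_int n\<bar> + 1) \<le> (B0 + 2 * B3) * decay_weight n" for n
  proof (cases "n = 0")
    case True
    thus ?thesis
      using c_le[of n] order_trans[OF norm_ge_zero, of "c 1" B3] c_cube_le[of 1]
      by (simp add: decay_weight_def)
  next
    case False
    define m where "m = \<bar>real_of_int n\<bar>"
    have m: "1 \<le> m" "decay_weight n = 1 / m^2"
      using False by (auto simp: m_def decay_weight_def)
    have "norm (c n) * (m + 1) \<le> 2 * (norm (c n) * m ^ 3) / m^2"
      using m(1) mult_right_mono[OF m(1) norm_ge_zero[of "c n"]]
      by (simp add: power2_eq_square power3_eq_cube field_simps)
    also have "\<dots> \<le> 2 * B3 / m^2"
      using c_cube_le[of n] m(1) by (simp add: m_def divide_right_mono)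
    also have "\<dots> \<le> (B0 + 2 * B3) * decay_weight n"
      using order_trans[OF norm_ge_zero c_le] m(2) by (simp add: divide_right_mono)
    finally show ?thesis
      by (simp add: m_def)
  qed
  thus thesis
    using that unfolding c_def by blast
qed

lemma summable_on_if_le_decay_weight:
  fixes u :: "int \<Rightarrow> 'a::banach"
  assumes "\<And>n. norm (u n) \<le> K * decay_weight n"
  shows "u summable_on UNIV"
proof -
  have "(\<lambda>n. K * decay_weight n) summable_on UNIV"
    by (intro summable_on_cmult_right summable_on_decay_weight)
  hence "(\<lambda>n. norm (u n)) summable_on UNIV"
    by (rule summable_on_comparison_test) (simp_all add: assms)
  thus ?thesis
    by (rule abs_summable_summable)
qed

lemma norm_sum_le_decay_weight:
  fixes u :: "int \<Rightarrow> 'a::real_normed_vector"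
  assumes "\<And>n. norm (u n) \<le> K * decay_weight n" and "finite F"
  shows "norm (sum u F) \<le> K * infsum decay_weight UNIV"
proof -
  have "0 \<le> K"
    using order_trans[OF norm_ge_zero assms(1)[of 0]] decay_weight_pos[of 0]
    by (simp add: zero_le_mult_iff)
  have "norm (sum u F) \<le> (\<Sum>n\<in>F. K * decay_weight n)"
    by (intro order_trans[OF norm_sum] sum_mono assms(1))
  also have "\<dots> = K * sum decay_weight F"
    by (simp add: sum_distrib_left)
  also have "\<dots> \<le> K * infsum decay_weight UNIV"
    by (intro mult_left_mono finite_sum_le_infsum summable_on_decay_weight)
       (simp_all add: \<open>0 \<le> K\<close> \<open>finite F\<close> less_imp_le decay_weight_pos)
  finally show ?thesis .
qed

lemma tendsto_symmetric_partial_sums_infsum: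
  fixes u :: "int \<Rightarrow> 'a::{topological_comm_monoid_add, t2_space}"
  assumes "u summable_on UNIV"
  shows "(\<lambda>N. sum u {- int N..int N}) \<longlonglongrightarrow> infsum u UNIV"
proof -
  have "filterlim (\<lambda>N. {- int N..int N}) (finite_subsets_at_top UNIV) sequentially"
    unfolding filterlim_finite_subsets_at_top
  proof (intro allI impI)
    fix X :: "int set"
    assume "finite X \<and> X \<subseteq> UNIV"
    hence "bdd_above (abs ` X)"
      by (intro bdd_above_finite) simp
    then obtain M where "\<forall>n\<in>X. \<bar>n\<bar> \<le> M"
      by (auto simp: bdd_above_def)
    hence "X \<subseteq> {- int N..int N}" if "M \<le> int N" for N
      using that by fastforce
    thus "eventually (\<lambda>N. finite {- int N..int N} \<and> X \<subseteq> {- int N..int N}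
                           \<and> {- int N..int N} \<subseteq> UNIV) sequentially"
      unfolding eventually_sequentially by (intro exI[of _ "nat M"]) auto
  qed
  thus ?thesis
    using filterlim_compose[OF infsum_tendsto[OF assms]] by (simp add: o_def)
qed

lemma has_integral_truncated_pairing_zero:
  fixes g g' :: "real \<Rightarrow> complex" and a :: "int \<Rightarrow> complex"
  assumes g: "\<And>x. (g has_vector_derivative g' x) (at x)" and per: "g (2*pi) = g 0"
    and "finite F"
  shows "((\<lambda>\<theta>. g \<theta> * (\<Sum>n\<in>F. of_int \<bar>n\<bar> * a n * cis (of_int n * \<theta>))
                 - \<i> * g' \<theta> * (\<Sum>n\<in>F. of_int (sgn n) * a n * cis (of_int n * \<theta>)))
           has_integral 0) {0..2*pi}"
proof -
  define E where "E n x = cis (of_int n * x) * g x" for n x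
  define E' where "E' n x = \<i> * of_int n * cis (of_int n * x) * g x + cis (of_int n * x) * g' x" for n x
  have "(E' n has_integral E n (2*pi) - E n 0) {0..2*pi}" for n
  proof (rule fundamental_theorem_of_calculus)
    fix x
    show "(E n has_vector_derivative E' n x) (at x within {0..2*pi})"
      using has_vector_derivative_mult[OF has_vector_derivative_cis_linear[of "of_int n"]
          has_vector_derivative_at_within[OF g]]
      unfolding E_def E'_def by (simp add: algebra_simps)
  qed simp
  moreover have "E n (2*pi) = E n 0" for n
    using cis_multiple_2pi[of "of_int n"] per by (simp add: E_def mult.commute mult.left_commute)
  ultimately have "((\<lambda>x. - \<i> * of_int (sgn n) * a n * E' n x) has_integral 0) {0..2*pi}" for n
    using has_integral_mult_right[of "E' n" 0 "{0..2*pi}" "- \<i> * of_int (sgn n) * a n"] by simp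
  hence "((\<lambda>x. \<Sum>n\<in>F. - \<i> * of_int (sgn n) * a n * E' n x) has_integral (\<Sum>n\<in>F. 0)) {0..2*pi}"
    by (intro has_integral_sum \<open>finite F\<close>)
  hence "((\<lambda>x. \<Sum>n\<in>F. - \<i> * of_int (sgn n) * a n * E' n x) has_integral 0) {0..2*pi}"
    by simp
  moreover have "- \<i> * of_int (sgn n) * a n * E' n x
      = g x * (of_int \<bar>n\<bar> * a n * cis (of_int n * x))
        - \<i> * g' x * (of_int (sgn n) * a n * cis (of_int n * x))" for n x
  proof -
    have "of_int (sgn n) * of_int n = (of_int \<bar>n\<bar> :: complex)"
      by (cases "0 < n"; cases "n = 0") auto
    thus ?thesis
      unfolding E'_def by (simp add: algebra_simps)
  qed
  ultimately show ?thesis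
    by (simp add: sum_distrib_left sum_subtractf)
qed

lemma integral_pairing_with_fourier_series_zero:
  fixes g g' :: "real \<Rightarrow> complex" and a :: "int \<Rightarrow> complex"
  assumes a: "\<And>n. norm (a n) * (\<bar>real_of_int n\<bar> + 1) \<le> K * decay_weight n"
    and g: "\<And>x. (g has_vector_derivative g' x) (at x)" and cont: "continuous_on UNIV g'"
    and per: "g (2*pi) = g 0"
  shows "integral {0..2*pi} (\<lambda>\<theta>. g \<theta> * (\<Sum>\<^sub>\<infinity>n. of_int \<bar>n\<bar> * a n * cis (of_int n * \<theta>))
            - \<i> * g' \<theta> * (\<Sum>\<^sub>\<infinity>n. of_int (sgn n) * a n * cis (of_int n * \<theta>))) = 0"
proof -
  define L where "L \<theta> n = of_int \<bar>n\<bar> * a n * cis (of_int n * \<theta>)" for \<theta> n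
  define H where "H \<theta> n = of_int (sgn n) * a n * cis (of_int n * \<theta>)" for \<theta> n
  define S where "S N \<theta> = g \<theta> * sum (L \<theta>) {- int N..int N} - \<i> * g' \<theta> * sum (H \<theta>) {- int N..int N}"
    for N \<theta>
  have L_le: "norm (L \<theta> n) \<le> K * decay_weight n" for \<theta> n
  proof -
    have "norm (L \<theta> n) \<le> norm (a n) * (\<bar>real_of_int n\<bar> + 1)"
      by (simp add: L_def norm_mult algebra_simps)
    thus ?thesis using a[of n] by linarith
  qed
  have H_le: "norm (H \<theta> n) \<le> K * decay_weight n" for \<theta> n
  proof -
    have "norm (H \<theta> n) \<le> norm (a n)"
      by (simp add: H_def norm_mult sgn_if)
    also have "\<dots> \<le> norm (a n) * (\<bar>real_of_int n\<bar> + 1)"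
      by (simp add: algebra_simps)
    finally have "norm (H \<theta> n) \<le> norm (a n) * (\<bar>real_of_int n\<bar> + 1)" .
    thus ?thesis using a[of n] by linarith
  qed
  have S_0: "(S N has_integral 0) {0..2*pi}" for N
    unfolding S_def L_def H_def by (rule has_integral_truncated_pairing_zero[OF g per]) simp
  have "(\<lambda>N. S N \<theta>) \<longlonglongrightarrow> g \<theta> * infsum (L \<theta>) UNIV - \<i> * g' \<theta> * infsum (H \<theta>) UNIV" for \<theta>
    unfolding S_def using L_le H_le
    by (intro tendsto_intros tendsto_symmetric_partial_sums_infsum summable_on_if_le_decay_weight)
  moreover obtain Bg Bg' where "\<And>x. x \<in> {0..2*pi} \<Longrightarrow> norm (g x) \<le> Bg"
    "\<And>x. x \<in> {0..2*pi} \<Longrightarrow> norm (g' x) \<le> Bg'"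
  proof -
    have bounded: "\<exists>B. \<forall>x\<in>{0..2*pi}. norm (f x) \<le> B" if "continuous_on UNIV f" for f :: "real \<Rightarrow> complex"
      using compact_imp_bounded[OF compact_continuous_image[OF continuous_on_subset[OF that] compact_Icc]]
      by (simp add: bounded_iff)
    have "continuous_on UNIV g"
      using g by (auto intro: continuous_at_imp_continuous_on has_vector_derivative_continuous)
    with cont bounded show thesis
      using that by meson
  qed
  hence "norm (S N \<theta>) \<le> Bg * (K * infsum decay_weight UNIV) + Bg' * (K * infsum decay_weight UNIV)"
    if "\<theta> \<in> {0..2*pi}" for N \<theta>
    unfolding S_def using that
    by (intro order_trans[OF norm_triangle_ineq4] add_mono)
       (auto simp: norm_mult intro!: mult_mono' norm_sum_le_decay_weight L_le H_le)
  ultimately have "(\<lambda>N. integral {0..2*pi} (S N)) \<longlonglongrightarrow>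
      integral {0..2*pi} (\<lambda>\<theta>. g \<theta> * infsum (L \<theta>) UNIV - \<i> * g' \<theta> * infsum (H \<theta>) UNIV)"
    using has_integral_integrable[OF S_0]
    by (intro dominated_convergence(2)[where h = "\<lambda>_. Bg * (K * infsum decay_weight UNIV)
                                                       + Bg' * (K * infsum decay_weight UNIV)"])
       auto
  thus ?thesis
    using integral_unique[OF S_0] by (simp add: LIMSEQ_const_iff L_def[abs_def] H_def[abs_def])
qed

definition flow_rhs :: "(real \<Rightarrow> complex) \<Rightarrow> real \<Rightarrow> complex" where
  "flow_rhs f \<theta> = - f \<theta> * Lam f \<theta> + hilbert f \<theta> * Dop f \<theta>"

lemma integral_flow_rhs_div_square_eq_0:
  fixes d :: "nat \<Rightarrow> real \<Rightarrow> real"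
  assumes der: "\<And>k x. (d k has_real_derivative d (Suc k) x) (at x)"
    and per: "\<And>k. d k (2*pi) = d k 0" and pos: "\<And>x. 0 < d 0 x"
  shows "integral {0..2*pi} (\<lambda>\<theta>. flow_rhs (\<lambda>x. complex_of_real (d 0 x)) \<theta> / complex_of_real (d 0 \<theta>)^2) = 0"
proof -
  define f where "f x = complex_of_real (d 0 x)" for x
  define g where "g x = complex_of_real (1 / d 0 x)" for x
  define g' where "g' x = complex_of_real (- d 1 x / d 0 x ^ 2)" for x
  obtain K where K: "\<And>n. norm (fourier_coeff f n) * (\<bar>real_of_int n\<bar> + 1) \<le> K * decay_weight n"
    using fourier_coeff_decay[of d, OF der per] unfolding f_def by blast
  have "((\<lambda>x. 1 / d 0 x) has_real_derivative - d 1 x / d 0 x ^ 2) (at x)" for x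
    using pos[of x] by (auto intro!: derivative_eq_intros der simp: power2_eq_square)
  hence g: "(g has_vector_derivative g' x) (at x)" for x
    unfolding g_def g'_def by (rule has_vector_derivative_of_real)
  have "continuous_on UNIV (d k)" for k
    using der by (meson DERIV_isCont continuous_at_imp_continuous_on)
  hence "continuous_on UNIV g'"
    unfolding g'_def using pos by (intro continuous_intros) (auto simp: less_imp_neq[symmetric])
  moreover have "g (2*pi) = g 0"
    by (simp add: g_def per)
  ultimately have "integral {0..2*pi} (\<lambda>\<theta>. g \<theta> * Lam f \<theta> - \<i> * g' \<theta> * hilbert f \<theta>) = 0"
    unfolding Lam_def hilbert_def by (rule integral_pairing_with_fourier_series_zero[OF K g])
  moreover have integrand: "flow_rhs f \<theta> / f \<theta> ^ 2 = - (g \<theta> * Lam f \<theta> - \<i> * g' \<theta> * hilbert f \<theta>)" for \<theta>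
  proof -
    have "Dop f \<theta> = - \<i> * complex_of_real (d 1 \<theta>)"
      unfolding Dop_def f_def by (simp add: vector_derivative_at[OF has_vector_derivative_of_real[OF der]])
    thus ?thesis
      using pos[of \<theta>] by (simp add: flow_rhs_def f_def g_def g'_def field_simps power2_eq_square)
  qed
  ultimately have "integral {0..2*pi} (\<lambda>\<theta>. flow_rhs f \<theta> / f \<theta> ^ 2) = 0"
    by (simp only: integrand integral_neg) simp
  thus ?thesis
    by (simp add: f_def[abs_def])
qed

lemma has_real_derivative_sections:
  fixes G :: "real \<times> real \<Rightarrow> real"
  assumes G: "(G has_derivative (\<lambda>h. fst h * Gx + snd h * Gy)) (at (s, y) within I \<times> UNIV)"
    and "s \<in> I"
  shows "((\<lambda>y. G (s, y)) has_real_derivative Gy) (at y)"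
    and "((\<lambda>s. G (s, y)) has_real_derivative Gx) (at s within I)"
proof -
  have "((\<lambda>y. (s, y)) has_derivative (\<lambda>h. (0, h))) (at y)"
    by (auto intro!: derivative_eq_intros)
  from has_derivative_in_compose[OF this has_derivative_subset[OF G]]
  show "((\<lambda>y. G (s, y)) has_real_derivative Gy) (at y)"
    unfolding has_field_derivative_def using \<open>s \<in> I\<close> by (auto simp: mult_commute_abs)
  have "((\<lambda>s. (s, y)) has_derivative (\<lambda>h. (h, 0))) (at s within I)"
    by (auto intro!: derivative_eq_intros)
  from has_derivative_in_compose[OF this has_derivative_subset[OF G]]
  show "((\<lambda>s. G (s, y)) has_real_derivative Gx) (at s within I)"
    unfolding has_field_derivative_def by (auto simp: mult_commute_abs)
qed

lemma smooth2_on_strip_sections: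
  assumes "smooth2_on (I \<times> UNIV) (\<lambda>(\<tau>, \<theta>). \<alpha> \<tau> \<theta>)"
  obtains \<alpha>' d where
    "\<And>\<tau> \<theta>. \<tau> \<in> I \<Longrightarrow> ((\<lambda>s. \<alpha> s \<theta>) has_real_derivative \<alpha>' \<tau> \<theta>) (at \<tau> within I)"
    "continuous_on (I \<times> UNIV) (\<lambda>(\<tau>, \<theta>). \<alpha> \<tau> \<theta>)" "continuous_on (I \<times> UNIV) (\<lambda>(\<tau>, \<theta>). \<alpha>' \<tau> \<theta>)"
    "\<And>\<tau> k \<theta>. \<tau> \<in> I \<Longrightarrow> (d \<tau> k has_real_derivative d \<tau> (Suc k) \<theta>) (at \<theta>)"
    "\<And>\<tau>. \<tau> \<in> I \<Longrightarrow> d \<tau> 0 = \<alpha> \<tau>"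
proof -
  obtain G :: "nat \<Rightarrow> nat \<Rightarrow> real \<times> real \<Rightarrow> real" where
    G0: "\<forall>x\<in>I \<times> UNIV. G 0 0 x = (\<lambda>(\<tau>, \<theta>). \<alpha> \<tau> \<theta>) x" and
    G: "\<forall>j k. \<forall>x\<in>I \<times> UNIV.
          (G j k has_derivative (\<lambda>h. fst h * G (Suc j) k x + snd h * G j (Suc k) x)) (at x within I \<times> UNIV)"
    using assms unfolding smooth2_on_def by blast
  have cont: "continuous_on (I \<times> UNIV) (G j k)" for j k
    unfolding continuous_on_eq_continuous_within using G has_derivative_continuous by blast
  have sections: "((\<lambda>\<theta>. G j k (\<tau>, \<theta>)) has_real_derivative G j (Suc k) (\<tau>, \<theta>)) (at \<theta>)"
    "((\<lambda>s. G j k (s, \<theta>)) has_real_derivative G (Suc j) k (\<tau>, \<theta>)) (at \<tau> within I)"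
    if "\<tau> \<in> I" for j k \<tau> \<theta>
    using has_real_derivative_sections[OF G[rule_format, of "(\<tau>, \<theta>)" j k] that] that by auto
  show thesis
  proof (rule that[of "\<lambda>\<tau> \<theta>. G 1 0 (\<tau>, \<theta>)" "\<lambda>\<tau> k \<theta>. G 0 k (\<tau>, \<theta>)"])
    show "((\<lambda>s. \<alpha> s \<theta>) has_real_derivative G 1 0 (\<tau>, \<theta>)) (at \<tau> within I)" if "\<tau> \<in> I" for \<tau> \<theta>
      using sections(2)[OF that, of 0 0 \<theta>] unfolding has_field_derivative_def One_nat_def
      by (rule has_derivative_transform[OF that, rotated]) (use G0 in auto)
    show "continuous_on (I \<times> UNIV) (\<lambda>(\<tau>, \<theta>). \<alpha> \<tau> \<theta>)"
      using cont[of 0 0] by (rule continuous_on_eq) (use G0 in auto)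
    show "continuous_on (I \<times> UNIV) (\<lambda>(\<tau>, \<theta>). G 1 0 (\<tau>, \<theta>))"
      using cont[of 1 0] by (simp add: case_prod_unfold)
    show "((\<lambda>\<theta>. G 0 k (\<tau>, \<theta>)) has_real_derivative G 0 (Suc k) (\<tau>, \<theta>)) (at \<theta>)"
      if "\<tau> \<in> I" for \<tau> k \<theta>
      using sections(1)[OF that] .
    show "(\<lambda>\<theta>. G 0 0 (\<tau>, \<theta>)) = \<alpha> \<tau>" if "\<tau> \<in> I" for \<tau>
      using that G0 by auto
  qed
qed

lemma continuous_on_section:
  assumes "continuous_on (I \<times> UNIV) (\<lambda>(s, \<theta>). f s \<theta>)" and "s \<in> I"
  shows "continuous_on UNIV (f s)"
proof -
  have "continuous_on UNIV (\<lambda>\<theta>. (s, \<theta>))" "(\<lambda>\<theta>. (s, \<theta>)) ` UNIV \<subseteq> I \<times> UNIV"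
    using \<open>s \<in> I\<close> by (auto intro!: continuous_intros)
  from continuous_on_compose2[OF assms(1) this]
  show ?thesis
    by simp
qed

lemma has_real_derivative_integral_inverse:
  fixes \<alpha> \<alpha>' :: "real \<Rightarrow> real \<Rightarrow> real"
  assumes "convex I" and "t \<in> I"
    and der: "\<And>s \<theta>. s \<in> I \<Longrightarrow> ((\<lambda>s. \<alpha> s \<theta>) has_real_derivative \<alpha>' s \<theta>) (at s within I)"
    and cont: "continuous_on (I \<times> UNIV) (\<lambda>(s, \<theta>). \<alpha> s \<theta>)" and cont': "continuous_on (I \<times> UNIV) (\<lambda>(s, \<theta>). \<alpha>' s \<theta>)"
    and nz: "\<And>s \<theta>. s \<in> I \<Longrightarrow> \<alpha> s \<theta> \<noteq> 0"
  shows "((\<lambda>s. integral {a..b} (\<lambda>\<theta>. 1 / \<alpha> s \<theta>)) has_real_derivative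
            integral {a..b} (\<lambda>\<theta>. - \<alpha>' t \<theta> / \<alpha> t \<theta> ^ 2)) (at t within I)"
proof -
  have "((\<lambda>s. integral (cbox a b) (\<lambda>\<theta>. 1 / \<alpha> s \<theta>)) has_real_derivative
            integral (cbox a b) (\<lambda>\<theta>. - \<alpha>' t \<theta> / \<alpha> t \<theta> ^ 2)) (at t within I)"
  proof (rule leibniz_rule_field_derivative[OF _ _ _ \<open>t \<in> I\<close> \<open>convex I\<close>])
    fix s \<theta>
    assume "s \<in> I"
    show "((\<lambda>s. 1 / \<alpha> s \<theta>) has_real_derivative - \<alpha>' s \<theta> / \<alpha> s \<theta> ^ 2) (at s within I)"
      using der[OF \<open>s \<in> I\<close>] nz[OF \<open>s \<in> I\<close>]
      by (auto intro!: derivative_eq_intros simp: power2_eq_square)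
  next
    fix s
    assume "s \<in> I"
    have cont_s: "continuous_on UNIV (\<alpha> s)"
      using cont \<open>s \<in> I\<close> by (rule continuous_on_section)
    have "continuous_on (cbox a b) (\<lambda>\<theta>. 1 / \<alpha> s \<theta>)"
      using nz[OF \<open>s \<in> I\<close>] by (intro continuous_intros continuous_on_subset[OF cont_s]) auto
    thus "(\<lambda>\<theta>. 1 / \<alpha> s \<theta>) integrable_on cbox a b"
      by (rule integrable_continuous)
  next
    have sub: "I \<times> cbox a b \<subseteq> I \<times> UNIV"
      by auto
    show "continuous_on (I \<times> cbox a b) (\<lambda>(s, \<theta>). - \<alpha>' s \<theta> / \<alpha> s \<theta> ^ 2)"
      using continuous_on_subset[OF cont sub] continuous_on_subset[OF cont' sub] nz
      by (auto simp: case_prod_unfold intro!: continuous_intros)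
  qed
  thus ?thesis
    by (simp add: cbox_interval)
qed

lemma integral_div_square_eq_0_if_flow_rhs:
  fixes d :: "nat \<Rightarrow> real \<Rightarrow> real" and a' :: "real \<Rightarrow> real"
  assumes der: "\<And>k x. (d k has_real_derivative d (Suc k) x) (at x)"
    and per: "\<And>x. d 0 (x + 2*pi) = d 0 x" and pos: "\<And>x. 0 < d 0 x"
    and rhs: "\<And>\<theta>. flow_rhs (\<lambda>x. complex_of_real (d 0 x)) \<theta> = complex_of_real (a' \<theta>)"
    and cont: "continuous_on UNIV a'"
  shows "integral {0..2*pi} (\<lambda>\<theta>. a' \<theta> / d 0 \<theta> ^ 2) = 0"
proof -
  have "d k (2*pi) = d k 0" for k
    using periodic_higher_derivs[of d "2*pi", OF der per, of k 0] by simp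
  hence "integral {0..2*pi} (\<lambda>\<theta>. complex_of_real (a' \<theta> / d 0 \<theta> ^ 2)) = 0"
    using integral_flow_rhs_div_square_eq_0[of d, OF der _ pos] by (simp add: rhs)
  moreover have "continuous_on {0..2*pi} (\<lambda>\<theta>. a' \<theta> / d 0 \<theta> ^ 2)"
    using der pos cont
    by (intro continuous_intros continuous_on_subset[OF cont])
       (auto intro: continuous_at_imp_continuous_on DERIV_isCont simp: less_imp_neq[symmetric])
  ultimately show ?thesis
    using integral_unique[OF has_integral_of_real[OF integrable_integral[OF integrable_continuous_real]]]
    by (metis of_real_eq_0_iff)
qed

lemma at_within_nontrivial_interval:
  fixes I :: "real set"
  assumes "is_interval I" and "p \<in> I" "q \<in> I" "p \<noteq> q" and "t \<in> I"
  shows "at t within I \<noteq> bot"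
proof -
  have "t islimpt I"
    using connected_imp_perfect[OF is_interval_connected[OF \<open>is_interval I\<close>] \<open>t \<in> I\<close>] assms(2-4)
    by blast
  thus ?thesis
    by (simp add: trivial_limit_within)
qed

theorem lemma6p3:
  fixes I :: "real set" and \<alpha> :: "real \<Rightarrow> real \<Rightarrow> real"
  assumes interval: "is_interval I"
    and periodic: "\<forall>\<tau>\<in>I. \<forall>\<theta>. \<alpha> \<tau> (\<theta> + 2*pi) = \<alpha> \<tau> \<theta>"
    and smooth: "smooth2_on (I \<times> UNIV) (\<lambda>(\<tau>, \<theta>). \<alpha> \<tau> \<theta>)"
    and pos: "\<forall>\<tau>\<in>I. \<forall>\<theta>. 0 < \<alpha> \<tau> \<theta>"
    and eqn: "\<forall>\<tau>\<in>I. \<forall>\<theta>.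
      ((\<lambda>t. complex_of_real (\<alpha> t \<theta>)) has_vector_derivative
        (- complex_of_real (\<alpha> \<tau> \<theta>) * Lam (\<lambda>x. complex_of_real (\<alpha> \<tau> x)) \<theta>
         + hilbert (\<lambda>x. complex_of_real (\<alpha> \<tau> x)) \<theta> * Dop (\<lambda>x. complex_of_real (\<alpha> \<tau> x)) \<theta>))
        (at \<tau> within I)"
  shows "\<forall>\<tau>1\<in>I. \<forall>\<tau>2\<in>I.
    integral {0..2*pi} (\<lambda>\<theta>. 1 / \<alpha> \<tau>1 \<theta>) = integral {0..2*pi} (\<lambda>\<theta>. 1 / \<alpha> \<tau>2 \<theta>)"
proof (cases "\<exists>p\<in>I. \<exists>q\<in>I. p \<noteq> q")
  case False
  thus ?thesis by auto
next
  case True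
  \<comment> \<open>Only when \<open>I\<close> has two points are derivatives within \<open>I\<close> unique, so that the equation
    identifies \<open>flow_rhs\<close> with the time derivative \<open>\<alpha>'\<close>.\<close>
  obtain \<alpha>' d where \<alpha>': "\<And>\<tau> \<theta>. \<tau> \<in> I \<Longrightarrow> ((\<lambda>s. \<alpha> s \<theta>) has_real_derivative \<alpha>' \<tau> \<theta>) (at \<tau> within I)"
    and cont: "continuous_on (I \<times> UNIV) (\<lambda>(\<tau>, \<theta>). \<alpha> \<tau> \<theta>)" "continuous_on (I \<times> UNIV) (\<lambda>(\<tau>, \<theta>). \<alpha>' \<tau> \<theta>)"
    and d: "\<And>\<tau> k \<theta>. \<tau> \<in> I \<Longrightarrow> (d \<tau> k has_real_derivative d \<tau> (Suc k) \<theta>) (at \<theta>)"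
    and d0: "\<And>\<tau>. \<tau> \<in> I \<Longrightarrow> d \<tau> 0 = \<alpha> \<tau>"
    using smooth2_on_strip_sections[OF smooth] by metis
  have "integral {0..2*pi} (\<lambda>\<theta>. \<alpha>' \<tau> \<theta> / \<alpha> \<tau> \<theta> ^ 2) = 0" if "\<tau> \<in> I" for \<tau>
  proof -
    have "flow_rhs (\<lambda>x. complex_of_real (\<alpha> \<tau> x)) \<theta> = complex_of_real (\<alpha>' \<tau> \<theta>)" for \<theta>
      using True that eqn has_vector_derivative_of_real[OF \<alpha>'[OF that]]
      by (metis at_within_nontrivial_interval[OF interval] vector_derivative_unique_within flow_rhs_def)
    moreover have "continuous_on UNIV (\<alpha>' \<tau>)"
      using cont(2) that by (rule continuous_on_section)
    ultimately show ?thesis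
      using integral_div_square_eq_0_if_flow_rhs[of "d \<tau>"] d[OF that] d0[OF that] periodic pos that by auto
  qed
  hence "((\<lambda>s. integral {0..2*pi} (\<lambda>\<theta>. 1 / \<alpha> s \<theta>)) has_real_derivative 0) (at \<tau> within I)" if "\<tau> \<in> I" for \<tau>
    using has_real_derivative_integral_inverse[OF is_interval_convex[OF interval] that \<alpha>' cont, of 0 "2*pi"]
      pos that by (simp add: integral_neg less_imp_neq[symmetric])
  hence "\<exists>c. \<forall>s\<in>I. integral {0..2*pi} (\<lambda>\<theta>. 1 / \<alpha> s \<theta>) = c"
    by (intro has_field_derivative_zero_constant[OF is_interval_convex[OF interval]])
  thus ?thesis
    by auto
qed

end
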